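(* Let $G$ be a CDF on $[\underline{\theta},\overline{\theta}]$ and $\phi_d>0$, and let $\tau$ be a weak-highest equilibrium threshold, i.e. $\tau-\phi_d=E_G[s\mid s\le\tau]$ and $\tau'-\phi_d\ge E_G[s\mid s\le\tau']$ for all $\tau'>\tau$. Then for any $\tau_a,\tau_b$ with $\tau\le\tau_a\le\tau_b$, $\int_{\underline{\theta}}^{\tau_b}G(s)\,ds\le e^{(\tau_b-\tau_a)/\phi_d}\int_{\underline{\theta}}^{\tau_a}G(s)\,ds$, with equality if and only if $\tau'-\phi_d=E_G[s\mid s\le\tau']$ for all $\tau'\in[\tau_a,\tau_b]$.
   Context: $\underline{\theta}<\overline{\theta}$ are real numbers with $\underline{\theta}\ge0$; $G$ is the distribution of scores $s\in[\underline{\theta},\overline{\theta}]$ and $\phi_d$ is a disclosure fee. *)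

theory Defs
  imports "HOL-Probability.Probability"
begin

definition cond_exp_le :: "real measure \<Rightarrow> real \<Rightarrow> real" where
  "cond_exp_le M t = (LINT s:{..t}|M. s) / measure M {..t}"

end

theory Submission
  imports Defs
begin

text \<open>Write \<open>G\<close> for the CDF and \<open>I(t) = \<integral>\<^sub>\<theta>\<^sub>l\<^sup>t G\<close>. Integration by parts gives
  \<open>E[s | s \<le> t] = t - I(t) / G(t)\<close>, so the weak-highest condition says exactly that
  \<open>\<phi>\<^sub>d G \<le> I\<close> on \<open>[\<tau>, \<infinity>)\<close>, with equality at the equilibrium thresholds. As \<open>G\<close> is the
  derivative of \<open>I\<close> in the integral sense, this is the inequality \<open>I' \<le> I / \<phi>\<^sub>d\<close>, and Gronwall's
  inequality gives the exponential bound. Equality in the bound forces \<open>I\<close> to be exactly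
  exponential on \<open>[\<tau>\<^sub>a, \<tau>\<^sub>b]\<close>; comparing its difference quotients with the nondecreasing,
  right-continuous \<open>G\<close> then yields \<open>\<phi>\<^sub>d G = I\<close> there. Conversely \<open>\<phi>\<^sub>d G = I\<close> is the
  equation \<open>I' = I / \<phi>\<^sub>d\<close>, and Gronwall applied to \<open>-I\<close> gives the reverse bound.\<close>

lemma eq_if_abs_diff_le_mult_diff:
  fixes D F :: "real \<Rightarrow> real"
  assumes incr: "\<And>u w. a \<le> u \<Longrightarrow> u \<le> w \<Longrightarrow> \<bar>D w - D u\<bar> \<le> (w - u) * (F w - F u)"
    and "a \<le> b"
  shows "D b = D a"
proof -
  have "\<bar>D b - D a\<bar> \<le> (b - a) * (F b - F a) / real n" if "n > 0" for n :: nat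
  proof -
    define h where "h = (b - a) / real n"
    define x where "x k = a + real k * h" for k :: nat
    have "0 \<le> h"
      using \<open>a \<le> b\<close> by (simp add: h_def)
    then have x_step: "a \<le> x k" "x k \<le> x (Suc k)" "x (Suc k) - x k = h" for k
      by (simp_all add: x_def distrib_right)
    have ends: "x 0 = a" "x n = b"
      using that by (simp_all add: x_def h_def)
    have "\<bar>D b - D a\<bar> = \<bar>\<Sum>k<n. D (x (Suc k)) - D (x k)\<bar>"
      using sum_lessThan_telescope[of "\<lambda>k. D (x k)" n] by (simp add: ends)
    also have "\<dots> \<le> (\<Sum>k<n. \<bar>D (x (Suc k)) - D (x k)\<bar>)"
      by (rule sum_abs)
    also have "\<dots> \<le> (\<Sum>k<n. h * (F (x (Suc k)) - F (x k)))"
      by (intro sum_mono) (metis incr x_step)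
    also have "\<dots> = h * (F b - F a)"
      using sum_lessThan_telescope[of "\<lambda>k. F (x k)" n]
      by (simp only: sum_distrib_left[symmetric] ends)
    finally show ?thesis by (simp add: h_def)
  qed
  then have "\<bar>D b - D a\<bar> \<le> 0"
    by (intro LIMSEQ_le_const[OF lim_const_over_n[of "(b - a) * (F b - F a)"]])
       (use Suc_le_eq in blast)
  then show ?thesis by simp
qed

lemma gronwall_integral:
  fixes f :: "real \<Rightarrow> real"
  assumes "a \<le> b" and "0 \<le> k" and cont: "continuous_on {a..b} f"
    and bound: "\<And>x. x \<in> {a..b} \<Longrightarrow> f x \<le> c + k * integral {a..x} f"
  shows "f b \<le> c * exp (k * (b - a))"
proof -
  define J where "J x = integral {a..x} f" for x
  define K where "K x = exp (- k * (x - a)) * (k * J x + c)" for x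
  define K' where "K' x = exp (- k * (x - a)) * k * (f x - k * J x - c)" for x
  have "(K has_real_derivative K' x) (at x within {a..b})" if "x \<in> {a..b}" for x
    using integral_has_real_derivative[OF cont that] unfolding K_def K'_def J_def
    by (auto intro!: derivative_eq_intros simp: algebra_simps)
  then obtain \<xi> where \<xi>: "\<xi> \<in> {a..b}" "K b - K a = K' \<xi> * (b - a)"
    using mvt_very_simple[OF \<open>a \<le> b\<close>, of K "\<lambda>x. (*) (K' x)"] by (auto simp: has_field_derivative_def)
  have "K' \<xi> \<le> 0"
    unfolding K'_def J_def using bound[OF \<xi>(1)] \<open>0 \<le> k\<close>
    by (intro mult_nonneg_nonpos) auto
  then have "K b \<le> K a"
    using \<xi>(2) mult_nonpos_nonneg[of "K' \<xi>" "b - a"] \<open>a \<le> b\<close> by linarith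
  then have "(k * J b + c) / exp (k * (b - a)) \<le> c"
    by (simp add: K_def J_def exp_minus divide_inverse mult.commute)
  then have "k * J b + c \<le> c * exp (k * (b - a))"
    by (simp add: pos_divide_le_eq)
  then show ?thesis
    using bound[of b] \<open>a \<le> b\<close> by (simp add: J_def)
qed

locale integral_of_mono =
  fixes F :: "real \<Rightarrow> real" and \<theta> :: real
  assumes mono: "mono F"
begin

definition I :: "real \<Rightarrow> real" where
  "I x = integral {\<theta>..x} F"

lemma integrable: "F integrable_on {u..w}"
  using mono by (intro integrable_on_mono_on) (simp add: mono_on_def monoD)

lemma integral_bounds:
  assumes "u \<le> w"
  shows "(w - u) * F u \<le> integral {u..w} F" and "integral {u..w} F \<le> (w - u) * F w"
proof -
  have "integral {u..w} (\<lambda>_. F u) \<le> integral {u..w} F"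
    by (intro integral_le integrable) (auto intro: monoD[OF mono])
  then show "(w - u) * F u \<le> integral {u..w} F"
    using assms by simp
  have "integral {u..w} F \<le> integral {u..w} (\<lambda>_. F w)"
    by (intro integral_le integrable) (auto intro: monoD[OF mono])
  then show "integral {u..w} F \<le> (w - u) * F w"
    using assms by simp
qed

lemma I_diff:
  assumes "\<theta> \<le> u" and "u \<le> w"
  shows "I w - I u = integral {u..w} F"
  using Henstock_Kurzweil_Integration.integral_combine[OF assms integrable] by (simp add: I_def)

lemma continuous_on_I:
  assumes "\<theta> \<le> u"
  shows "continuous_on {u..w} I"
  using indefinite_integral_continuous_1[OF integrable[of \<theta> w]]
  unfolding I_def[abs_def] by (rule continuous_on_subset) (use assms in auto)

lemma I_growth_le_exp:
  assumes "\<theta> \<le> a" and "a \<le> b" and "0 < \<phi>"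
    and le: "\<And>x. x \<in> {a..b} \<Longrightarrow> \<phi> * F x \<le> I x"
  shows "I b \<le> exp ((b - a) / \<phi>) * I a"
proof -
  have "I x \<le> I a + 1 / \<phi> * integral {a..x} I" if x: "x \<in> {a..b}" for x
  proof -
    have "I x - I a = integral {a..x} F"
      using I_diff \<open>\<theta> \<le> a\<close> x by simp
    also have "\<dots> \<le> integral {a..x} (\<lambda>s. 1 / \<phi> * I s)"
    proof (rule integral_le[OF integrable])
      show "(\<lambda>s. 1 / \<phi> * I s) integrable_on {a..x}"
        by (intro integrable_continuous_interval continuous_intros continuous_on_I \<open>\<theta> \<le> a\<close>)
      show "F s \<le> 1 / \<phi> * I s" if "s \<in> {a..x}" for s
        using le[of s] that x \<open>0 < \<phi>\<close> by (simp add: field_simps)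
    qed
    also have "\<dots> = 1 / \<phi> * integral {a..x} I"
      by simp
    finally show ?thesis by simp
  qed
  from gronwall_integral[OF \<open>a \<le> b\<close> _ continuous_on_I[OF \<open>\<theta> \<le> a\<close>] this] \<open>0 < \<phi>\<close>
  show ?thesis by (simp add: mult.commute)
qed

lemma I_growth_eq_exp_if_eq:
  assumes "\<theta> \<le> a" and "a \<le> b" and "0 < \<phi>"
    and eq: "\<And>x. x \<in> {a..b} \<Longrightarrow> \<phi> * F x = I x"
  shows "I b = exp ((b - a) / \<phi>) * I a"
proof -
  have "- I x \<le> - I a + 1 / \<phi> * integral {a..x} (\<lambda>s. - I s)" if x: "x \<in> {a..b}" for x
  proof -
    have "I x - I a = integral {a..x} F"
      using I_diff \<open>\<theta> \<le> a\<close> x by simp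
    also have "\<dots> = integral {a..x} (\<lambda>s. 1 / \<phi> * I s)"
    proof (rule integral_cong)
      fix s assume "s \<in> {a..x}"
      then have "\<phi> * F s = I s"
        using x by (intro eq) auto
      then show "F s = 1 / \<phi> * I s"
        using \<open>0 < \<phi>\<close> by (simp add: field_simps)
    qed
    finally show ?thesis by simp
  qed
  from gronwall_integral[OF \<open>a \<le> b\<close> _ continuous_on_minus[OF continuous_on_I[OF \<open>\<theta> \<le> a\<close>]] this]
  have "exp ((b - a) / \<phi>) * I a \<le> I b"
    using \<open>0 < \<phi>\<close> by (simp add: mult.commute)
  with I_growth_le_exp[OF assms(1-3)] eq show ?thesis
    by (simp add: order_antisym)
qed

lemma eq_if_I_growth_eq_exp:
  assumes "\<theta> \<le> a" and "a < b" and "0 < \<phi>"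
    and nonneg: "\<And>x. 0 \<le> F x" and right_cont: "\<And>x. continuous (at_right x) F"
    and le: "\<And>x. x \<in> {a..b} \<Longrightarrow> \<phi> * F x \<le> I x"
    and growth: "I b = exp ((b - a) / \<phi>) * I a"
    and t: "t \<in> {a..b}"
  shows "\<phi> * F t = I t"
proof -
  have exp_on: "I x = exp ((x - a) / \<phi>) * I a" if "x \<in> {a..b}" for x
  proof (rule antisym)
    show "I x \<le> exp ((x - a) / \<phi>) * I a"
      using I_growth_le_exp[of a x \<phi>] assms that by auto
    have "I b \<le> exp ((b - x) / \<phi>) * I x"
      using I_growth_le_exp[of x b \<phi>] assms that by auto
    then have "exp ((b - x) / \<phi>) * (exp ((x - a) / \<phi>) * I a) \<le> exp ((b - x) / \<phi>) * I x"
      using growth by (simp add: mult.assoc[symmetric] exp_add[symmetric] add_divide_distrib[symmetric])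
    then show "exp ((x - a) / \<phi>) * I a \<le> I x"
      by simp
  qed
  have "0 \<le> \<phi> * F a" and "\<phi> * F a \<le> I a"
    using nonneg[of a] \<open>0 < \<phi>\<close> le[of a] \<open>a < b\<close> by simp_all
  then have "0 \<le> I a"
    by linarith
  have lower: "I u \<le> \<phi> * F w" if "a \<le> u" "u < w" "w \<le> b" for u w
  proof -
    have "I w = exp ((w - u) / \<phi>) * I u" and "0 \<le> I u"
      using exp_on[of w] exp_on[of u] that \<open>0 \<le> I a\<close>
      by (simp_all add: mult.assoc[symmetric] exp_add[symmetric] add_divide_distrib[symmetric])
    have "(w - u) / \<phi> \<le> exp ((w - u) / \<phi>) - 1"
      using exp_ge_add_one_self[of "(w - u) / \<phi>"] by linarith
    then have "(w - u) / \<phi> * I u \<le> (exp ((w - u) / \<phi>) - 1) * I u"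
      using \<open>0 \<le> I u\<close> by (rule mult_right_mono)
    also have "\<dots> = I w - I u"
      using \<open>I w = exp ((w - u) / \<phi>) * I u\<close> by (simp add: algebra_simps)
    also have "\<dots> \<le> (w - u) * F w"
      using I_diff[of u w] integral_bounds(2)[of u w] \<open>\<theta> \<le> a\<close> that by simp
    finally have "(w - u) * (I u / \<phi>) \<le> (w - u) * F w"
      by simp
    then have "I u / \<phi> \<le> F w"
      by (rule mult_left_le_imp_le) (use \<open>u < w\<close> in simp)
    then show ?thesis
      using \<open>0 < \<phi>\<close> by (simp add: pos_divide_le_eq mult.commute)
  qed
  have "I t \<le> \<phi> * F t"
  proof (cases "t < b")
    case True
    have "((\<lambda>w. \<phi> * F w) \<longlongrightarrow> \<phi> * F t) (at_right t)"
      using right_cont[of t] by (intro tendsto_intros) (simp add: continuous_within)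
    moreover have "\<forall>\<^sub>F w in at_right t. I t \<le> \<phi> * F w"
      using eventually_at_right_real[OF True] by eventually_elim (use lower t in auto)
    ultimately show ?thesis
      by (rule tendsto_lowerbound) simp
  next
    case False
    then have "t = b"
      using t by simp
    have "((\<lambda>u. exp ((u - a) / \<phi>) * I a) \<longlongrightarrow> exp ((b - a) / \<phi>) * I a) (at_left b)"
      using \<open>0 < \<phi>\<close> by (intro tendsto_intros) simp_all
    moreover have "\<forall>\<^sub>F u in at_left b. exp ((u - a) / \<phi>) * I a \<le> \<phi> * F b"
    proof (rule eventually_mono[OF eventually_at_left_real[OF \<open>a < b\<close>]])
      fix u assume "u \<in> {a<..<b}"
      then show "exp ((u - a) / \<phi>) * I a \<le> \<phi> * F b"
        using lower[of u b] exp_on[of u] by simp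
    qed
    ultimately have "exp ((b - a) / \<phi>) * I a \<le> \<phi> * F b"
      by (rule tendsto_upperbound) simp
    then show ?thesis
      using \<open>t = b\<close> growth by simp
  qed
  with le[OF t] show ?thesis by simp
qed

end

lemma (in real_distribution) cdf_eq_0_below_support:
  assumes "AE s in M. \<theta> \<le> s" and "t < \<theta>"
  shows "cdf M t = 0"
proof -
  have "measure M {..t} = measure M {}"
    using assms by (intro measure_eq_AE) (auto elim!: eventually_mono)
  then show ?thesis
    by (simp add: cdf_def2)
qed

lemma (in real_distribution) set_integrable_id_atMost:
  assumes "AE s in M. \<theta> \<le> s"
  shows "set_integrable M {..t} (\<lambda>s. s)"
  unfolding set_integrable_def
proof (rule Bochner_Integration.integrable_bound)
  show "integrable M (\<lambda>_. max \<bar>\<theta>\<bar> \<bar>t\<bar>)"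
    by simp
  show "AE s in M. norm (indicator {..t} s *\<^sub>R s) \<le> norm (max \<bar>\<theta>\<bar> \<bar>t\<bar>)"
    using assms by eventually_elim (auto simp: indicator_def)
qed simp

lemma (in real_distribution) set_integral_id_increment_bounds:
  assumes support: "AE s in M. \<theta> \<le> s" and "u \<le> w"
  shows "u * (cdf M w - cdf M u) \<le> (LINT s:{..w}|M. s) - (LINT s:{..u}|M. s)"
    and "(LINT s:{..w}|M. s) - (LINT s:{..u}|M. s) \<le> w * (cdf M w - cdf M u)"
proof -
  have int_id: "set_integrable M {u<..w} (\<lambda>s. s)"
    by (rule set_integrable_subset[OF set_integrable_id_atMost[OF support]]) auto
  have int_const: "set_integrable M {u<..w} (\<lambda>_. c)" for c :: real
    by (simp add: set_integrable_def less_top[symmetric])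
  have const: "(LINT s:{u<..w}|M. c) = c * measure M {u<..w}" for c :: real
    by (simp add: set_integral_const emeasure_finite)
  have disjoint: "{..u} \<inter> {u<..w} = {}" and union: "{..u} \<union> {u<..w} = {..w}"
    using \<open>u \<le> w\<close> by auto
  have split: "(LINT s:{..w}|M. s) - (LINT s:{..u}|M. s) = (LINT s:{u<..w}|M. s)"
    using set_integral_Un[OF disjoint set_integrable_id_atMost[OF support] int_id]
    unfolding union by simp
  have mass: "cdf M w - cdf M u = measure M {u<..w}"
    using cdf_diff_eq[of u w] \<open>u \<le> w\<close> by (cases "u = w") auto
  show "u * (cdf M w - cdf M u) \<le> (LINT s:{..w}|M. s) - (LINT s:{..u}|M. s)"
    using set_integral_mono[OF int_const int_id, of u] const[of u]
    unfolding split mass by simp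
  show "(LINT s:{..w}|M. s) - (LINT s:{..u}|M. s) \<le> w * (cdf M w - cdf M u)"
    using set_integral_mono[OF int_id int_const, of w] const[of w]
    unfolding split mass by simp
qed

lemma (in real_distribution) set_integral_id_atMost_eq:
  assumes support: "AE s in M. \<theta> \<le> s" and "\<theta> \<le> t"
  shows "(LINT s:{..t}|M. s) = t * cdf M t - integral {\<theta>..t} (cdf M)"
proof -
  interpret integral_of_mono "cdf M" \<theta>
    by unfold_locales (simp add: mono_def cdf_nondecreasing)
  \<comment> \<open>The defect of the integration-by-parts formula has second-order increments.\<close>
  define D where "D x = (LINT s:{..x}|M. s) - x * cdf M x + I x" for x
  have "\<bar>D w - D u\<bar> \<le> (w - u) * (cdf M w - cdf M u)" if "\<theta> \<le> u" "u \<le> w" for u w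
    using set_integral_id_increment_bounds[OF support that(2)] integral_bounds[OF that(2)] I_diff[OF that]
    unfolding D_def abs_le_iff by (simp add: algebra_simps)
  then have "D t = D \<theta>"
    using \<open>\<theta> \<le> t\<close> by (rule eq_if_abs_diff_le_mult_diff)
  also have "D \<theta> = 0"
  proof -
    have "(LINT s:{..\<theta>}|M. s) = (LINT s:{..\<theta>}|M. \<theta>)"
      using support by (intro set_lebesgue_integral_cong_AE) (auto elim!: eventually_mono)
    then show ?thesis
      by (simp add: D_def I_def set_integral_const emeasure_finite cdf_def2)
  qed
  finally show ?thesis
    by (simp add: D_def I_def)
qed

lemma (in real_distribution) cond_exp_le_eq:
  assumes "AE s in M. \<theta> \<le> s" and "\<theta> \<le> t" and "cdf M t \<noteq> 0"
  shows "cond_exp_le M t = t - integral {\<theta>..t} (cdf M) / cdf M t"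
  using set_integral_id_atMost_eq[OF assms(1,2)] assms(3)
  by (simp add: cond_exp_le_def cdf_def2[symmetric] field_simps)

lemma (in real_distribution) cond_exp_le_le_iff:
  assumes "AE s in M. \<theta> \<le> s" and "\<theta> \<le> t" and "0 < cdf M t"
  shows "cond_exp_le M t \<le> t - \<phi> \<longleftrightarrow> \<phi> * cdf M t \<le> integral {\<theta>..t} (cdf M)"
  using assms by (simp add: cond_exp_le_eq field_simps)

lemma (in real_distribution) eq_cond_exp_le_iff:
  assumes "AE s in M. \<theta> \<le> s" and "\<theta> \<le> t" and "0 < cdf M t"
  shows "t - \<phi> = cond_exp_le M t \<longleftrightarrow> \<phi> * cdf M t = integral {\<theta>..t} (cdf M)"
  using assms by (auto simp: cond_exp_le_eq field_simps)

theorem lemma11: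
  fixes M :: "real measure" and \<theta>l \<theta>h \<phi>d \<tau> \<tau>a \<tau>b :: real
  assumes "0 \<le> \<theta>l" and "\<theta>l < \<theta>h"
    and "real_distribution M" and "measure M {\<theta>l..\<theta>h} = 1"
    and "\<phi>d > 0"
    and "measure M {..\<tau>} > 0"
    and "\<tau> - \<phi>d = cond_exp_le M \<tau>"
    and "\<forall>\<tau>'>\<tau>. \<tau>' - \<phi>d \<ge> cond_exp_le M \<tau>'"
    and "\<tau> \<le> \<tau>a" and "\<tau>a \<le> \<tau>b"
  shows "integral {\<theta>l..\<tau>b} (cdf M) \<le> exp ((\<tau>b - \<tau>a) / \<phi>d) * integral {\<theta>l..\<tau>a} (cdf M)
       \<and> (\<tau>a < \<tau>b \<longrightarrow>
         (integral {\<theta>l..\<tau>b} (cdf M) = exp ((\<tau>b - \<tau>a) / \<phi>d) * integral {\<theta>l..\<tau>a} (cdf M)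
          \<longleftrightarrow> (\<forall>\<tau>'\<in>{\<tau>a..\<tau>b}. \<tau>' - \<phi>d = cond_exp_le M \<tau>')))"
proof -
  interpret real_distribution M by fact
  interpret integral_of_mono "cdf M" \<theta>l
    by unfold_locales (simp add: mono_def cdf_nondecreasing)
  have support: "AE s in M. \<theta>l \<le> s"
    using AE_in_set_eq_1[of "{\<theta>l..\<theta>h}"] assms(4) by (auto elim: eventually_mono)
  have cdf_pos: "0 < cdf M t" if "\<tau> \<le> t" for t
    using cdf_nondecreasing[OF that] assms(6) by (simp add: cdf_def2)
  then have "\<theta>l \<le> \<tau>"
    using cdf_eq_0_below_support[OF support, of \<tau>] by fastforce
  have eq_iff: "t - \<phi>d = cond_exp_le M t \<longleftrightarrow> \<phi>d * cdf M t = I t" if "\<tau> \<le> t" for t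
    using eq_cond_exp_le_iff[OF support _ cdf_pos] \<open>\<theta>l \<le> \<tau>\<close> that by (simp add: I_def)
  have le: "\<phi>d * cdf M t \<le> I t" if "\<tau> \<le> t" for t
    using cond_exp_le_le_iff[OF support _ cdf_pos] \<open>\<theta>l \<le> \<tau>\<close> that assms(8) eq_iff[of \<tau>] assms(7)
    by (cases "t = \<tau>") (auto simp: I_def)
  have "\<theta>l \<le> \<tau>a" and le_on: "\<And>x. x \<in> {\<tau>a..\<tau>b} \<Longrightarrow> \<phi>d * cdf M x \<le> I x"
    using \<open>\<theta>l \<le> \<tau>\<close> assms(9) le by auto
  show ?thesis
    unfolding I_def[symmetric]
  proof (intro conjI impI)
    show "I \<tau>b \<le> exp ((\<tau>b - \<tau>a) / \<phi>d) * I \<tau>a"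
      by (rule I_growth_le_exp[OF \<open>\<theta>l \<le> \<tau>a\<close> assms(10,5) le_on])
    assume "\<tau>a < \<tau>b"
    show "I \<tau>b = exp ((\<tau>b - \<tau>a) / \<phi>d) * I \<tau>a \<longleftrightarrow> (\<forall>\<tau>'\<in>{\<tau>a..\<tau>b}. \<tau>' - \<phi>d = cond_exp_le M \<tau>')"
      using eq_if_I_growth_eq_exp[OF \<open>\<theta>l \<le> \<tau>a\<close> \<open>\<tau>a < \<tau>b\<close> assms(5) cdf_nonneg cdf_is_right_cont le_on]
        I_growth_eq_exp_if_eq[OF \<open>\<theta>l \<le> \<tau>a\<close> assms(10,5)] eq_iff assms(9)
      by auto
  qed
qed

end
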